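(* Let $\zeta\equiv\Phi$ or $\zeta\equiv1$, $t\ge0$, $n\in\mathbb N^*$, and $(x_1,\dots,x_n)\in\Delta_{(n)}\cap((0,t]\times\mathbb{R}_+)^n$, $x_i=(t_i,\theta_i)$. Then $$c_n^{\zeta,t}(x_1,\dots,x_n)=c_n^{\zeta,t}(x_1,\dots,x_n)\,\mathbf 1_{\{\theta_1\le\mu\}}\prod_{i=2}^n\mathbf 1_{\{\theta_i\le\mu+\sum_{j=1}^{i-1}\Phi(t_i-t_j)\}}.$$
   Context: Let $\mu>0$ and $\Phi:\mathbb{R}_+\to\mathbb{R}_+$ integrable with $\int_0^\infty\Phi<1$. Let $\mathbb X=\mathbb{R}_+\times\mathbb{R}_+$, points $x=(t,\theta)$, and $\Delta_{(n)}:=\{((t_1,\theta_1),\dots,(t_n,\theta_n))\in\mathbb X^n: t_1<\dots<t_n\}$. Let $\Omega$ be the space of configurations $\omega=\sum_i\delta_{x_i}$ on $\mathbb X$ with $\mathbb P$ the Poisson measure making the canonical measure $N(\omega)=\omega$ a Poisson random measure of intensity $dt\,d\theta$. Let $\lambda$ be the unique pathwise solution of $\lambda_t=\mu+\int_{(0,t)\times\mathbb{R}_+}\Phi(t-s)\mathbf 1_{\{\theta\le\lambda_s\}}N(ds,d\theta)$, and for $\zeta\in\{\Phi,1\}$ set $X^\zeta_t:=\int_{(0,t)\times\mathbb{R}_+}\zeta(t-s)\mathbf 1_{\{\theta\le\lambda_s\}}N(ds,d\theta)$. For $x_1,\dots,x_n$ with $t_1<\dots<t_n$ and a functional $F$ of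 $\omega$, $\mathcal D^n_{(x_1,\dots,x_n)}F:=\sum_{J\subset\{x_1,\dots,x_n\}}(-1)^{n-|J|}F(\sum_{y\in J}\delta_y)$. Define $c_n^{\zeta,t}(x_1,\dots,x_n):=\mathcal D^n_{(x_{(1)},\dots,x_{(n)})}X^\zeta_t$, where $(x_{(1)},\dots,x_{(n)})$ is the reordering by increasing time coordinate. *)

theory Defs
  imports "HOL-Analysis.Analysis"
begin

text \<open>A finite configuration of points x = (t, theta) of R+ x R+ is represented by a
finite set of pairs.\<close>

function hawkes_lambda :: "real \<Rightarrow> (real \<Rightarrow> real) \<Rightarrow> (real \<times> real) set \<Rightarrow> real \<Rightarrow> real" where
  "hawkes_lambda \<mu> \<Phi> \<omega> t =
     (if finite \<omega> then
        \<mu> + (\<Sum>x\<in>{x\<in>\<omega>. 0 < fst x \<and> fst x < t}.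
               (if snd x \<le> hawkes_lambda \<mu> \<Phi> \<omega> (fst x) then \<Phi> (t - fst x) else 0))
      else 0)"
  by auto
termination
proof (relation "Wellfounded.measure (\<lambda>(\<mu>, \<Phi>, \<omega>, t). card {x\<in>\<omega>. 0 < fst x \<and> fst x < t})")
  show "wf (Wellfounded.measure (\<lambda>(\<mu>, \<Phi>, \<omega>, t). card {x\<in>\<omega>. 0 < fst x \<and> fst x < t}))" by simp
next
  fix \<mu> :: real and \<Phi> :: "real \<Rightarrow> real" and \<omega> :: "(real \<times> real) set" and t x
  assume fin: "finite \<omega>" and x: "x \<in> {x\<in>\<omega>. 0 < fst x \<and> fst x < t}"
  have "{y\<in>\<omega>. 0 < fst y \<and> fst y < fst x} \<subset> {y\<in>\<omega>. 0 < fst y \<and> fst y < t}"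
    using x by auto
  then have "card {y\<in>\<omega>. 0 < fst y \<and> fst y < fst x} < card {y\<in>\<omega>. 0 < fst y \<and> fst y < t}"
    using fin by (intro psubset_card_mono) auto
  then show "((\<mu>, \<Phi>, \<omega>, fst x), \<mu>, \<Phi>, \<omega>, t)
     \<in> Wellfounded.measure (\<lambda>(\<mu>, \<Phi>, \<omega>, t). card {x\<in>\<omega>. 0 < fst x \<and> fst x < t})" by simp
qed

definition hawkes_X :: "real \<Rightarrow> (real \<Rightarrow> real) \<Rightarrow> (real \<Rightarrow> real) \<Rightarrow> real \<Rightarrow> (real \<times> real) set \<Rightarrow> real" where
  "hawkes_X \<mu> \<Phi> \<zeta> t \<omega> =
     (\<Sum>x\<in>{x\<in>\<omega>. 0 < fst x \<and> fst x < t}.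
        (if snd x \<le> hawkes_lambda \<mu> \<Phi> \<omega> (fst x) then \<zeta> (t - fst x) else 0))"

definition diff_op :: "(real \<times> real) list \<Rightarrow> ((real \<times> real) set \<Rightarrow> real) \<Rightarrow> real" where
  "diff_op xs F = (\<Sum>J\<in>Pow (set xs). (-1) ^ (length xs - card J) * F J)"

definition c_coef :: "real \<Rightarrow> (real \<Rightarrow> real) \<Rightarrow> (real \<Rightarrow> real) \<Rightarrow> real \<Rightarrow> (real \<times> real) list \<Rightarrow> real" where
  "c_coef \<mu> \<Phi> \<zeta> t xs = diff_op (sort_key fst xs) (hawkes_X \<mu> \<Phi> \<zeta> t)"

end

theory Submission imports Defs begin

text \<open>Since \<open>\<Phi> \<ge> 0\<close>, the intensity of any sub-configuration of \<open>x\<^sub>1, \<dots>, x\<^sub>n\<close> at time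
\<open>t\<^sub>i\<close> is at most \<open>\<mu> + \<Sum>\<^sub>j\<^sub><\<^sub>i \<Phi>(t\<^sub>i - t\<^sub>j)\<close>. If \<open>\<theta>\<^sub>i\<close> exceeds this bound, the point \<open>x\<^sub>i\<close> is
rejected in every sub-configuration \<open>J\<close>, and a rejected point changes neither the intensity nor
\<open>X\<^sup>\<zeta>\<^sub>t\<close>. Hence \<open>X\<^sup>\<zeta>\<^sub>t(J) = X\<^sup>\<zeta>\<^sub>t(J - {x\<^sub>i})\<close>, the terms of the alternating sum defining \<open>c\<^sub>n\<close>
cancel in pairs, and \<open>c\<^sub>n = 0\<close>. Otherwise all indicators equal 1.\<close>

declare hawkes_lambda.simps[simp del]

lemma alternating_sum_Pow_eq_0_if_redundant:
  fixes F :: "'a set \<Rightarrow> 'b::comm_ring_1"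
  assumes fin: "finite S" and aS: "a \<in> S"
    and redundant: "\<And>J. J \<subseteq> S \<Longrightarrow> a \<in> J \<Longrightarrow> F J = F (J - {a})"
  shows "(\<Sum>J\<in>Pow S. (-1) ^ (card S - card J) * F J) = 0"
proof -
  define A where "A = S - {a}"
  have S: "S = insert a A" and aA: "a \<notin> A" and finA: "finite A"
    using aS fin by (auto simp: A_def)
  have inj: "inj_on (insert a) (Pow A)"
    using aA by (auto simp: inj_on_def)
  have "(\<Sum>J\<in>insert a ` Pow A. (-1) ^ (card S - card J) * F J)
        = (\<Sum>K\<in>Pow A. (-1) ^ (card S - card (insert a K)) * F (insert a K))"
    by (simp add: sum.reindex[OF inj])
  also have "\<dots> = (\<Sum>K\<in>Pow A. - ((-1) ^ (card S - card K) * F K))"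
  proof (rule sum.cong[OF refl])
    fix K assume K: "K \<in> Pow A"
    then have "finite K" "a \<notin> K" "card K \<le> card A"
      using finA aA by (auto intro: finite_subset card_mono)
    moreover have "card S = Suc (card A)"
      using S aA finA by simp
    moreover have "F (insert a K) = F K"
      using redundant[of "insert a K"] K S \<open>a \<notin> K\<close> by auto
    ultimately show "(-1) ^ (card S - card (insert a K)) * F (insert a K)
                     = - ((-1) ^ (card S - card K) * F K)"
      by (simp add: Suc_diff_le)
  qed
  finally have "(\<Sum>J\<in>insert a ` Pow A. (-1) ^ (card S - card J) * F J)
                = - (\<Sum>K\<in>Pow A. (-1) ^ (card S - card K) * F K)"
    by (simp add: sum_negf)
  moreover have "Pow A \<inter> insert a ` Pow A = {}"
    using aA by auto
  ultimately show ?thesis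
    unfolding S Pow_insert using finA by (simp add: sum.union_disjoint)
qed

lemma diff_op_eq_0_if_redundant:
  assumes "distinct xs" and "a \<in> set xs"
    and "\<And>J. J \<subseteq> set xs \<Longrightarrow> a \<in> J \<Longrightarrow> F J = F (J - {a})"
  shows "diff_op xs F = 0"
  using alternating_sum_Pow_eq_0_if_redundant[of "set xs" a F] assms
  by (simp add: diff_op_def distinct_card)

lemma sum_accepted_Diff_rejected:
  assumes "finite J" and "\<not> snd a \<le> \<Lambda> (fst a)"
  shows "(\<Sum>x\<in>{x\<in>J - {a}. P x}. if snd x \<le> \<Lambda> (fst x) then f x else 0)
         = (\<Sum>x\<in>{x\<in>J. P x}. if snd x \<le> \<Lambda> (fst x) then f x else 0)"
  using assms by (intro sum.mono_neutral_left) auto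

lemma hawkes_lambda_remove_rejected:
  assumes fin: "finite J" and rejected: "\<not> snd a \<le> hawkes_lambda \<mu> \<Phi> J (fst a)"
  shows "hawkes_lambda \<mu> \<Phi> (J - {a}) s = hawkes_lambda \<mu> \<Phi> J s"
proof (induction "card {x\<in>J. 0 < fst x \<and> fst x < s}" arbitrary: s rule: less_induct)
  case less
  have IH: "hawkes_lambda \<mu> \<Phi> (J - {a}) (fst y) = hawkes_lambda \<mu> \<Phi> J (fst y)"
    if "y \<in> {x\<in>J - {a}. 0 < fst x \<and> fst x < s}" for y
  proof (rule less)
    have "{x\<in>J. 0 < fst x \<and> fst x < fst y} \<subset> {x\<in>J. 0 < fst x \<and> fst x < s}"
      using that by auto
    then show "card {x\<in>J. 0 < fst x \<and> fst x < fst y} < card {x\<in>J. 0 < fst x \<and> fst x < s}"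
      using fin by (intro psubset_card_mono) auto
  qed
  have "hawkes_lambda \<mu> \<Phi> (J - {a}) s = \<mu> + (\<Sum>x\<in>{x\<in>J - {a}. 0 < fst x \<and> fst x < s}.
      if snd x \<le> hawkes_lambda \<mu> \<Phi> (J - {a}) (fst x) then \<Phi> (s - fst x) else 0)"
    using fin by (subst hawkes_lambda.simps) simp
  also have "\<dots> = \<mu> + (\<Sum>x\<in>{x\<in>J - {a}. 0 < fst x \<and> fst x < s}.
      if snd x \<le> hawkes_lambda \<mu> \<Phi> J (fst x) then \<Phi> (s - fst x) else 0)"
    using IH by (intro arg_cong2[where f = "(+)"] sum.cong) auto
  also have "\<dots> = \<mu> + (\<Sum>x\<in>{x\<in>J. 0 < fst x \<and> fst x < s}.
      if snd x \<le> hawkes_lambda \<mu> \<Phi> J (fst x) then \<Phi> (s - fst x) else 0)"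
    using sum_accepted_Diff_rejected[of J a "hawkes_lambda \<mu> \<Phi> J"] fin rejected by simp
  also have "\<dots> = hawkes_lambda \<mu> \<Phi> J s"
    using fin by (subst (2) hawkes_lambda.simps) simp
  finally show ?case .
qed

lemma hawkes_X_remove_rejected:
  assumes fin: "finite J" and rejected: "\<not> snd a \<le> hawkes_lambda \<mu> \<Phi> J (fst a)"
  shows "hawkes_X \<mu> \<Phi> \<zeta> t (J - {a}) = hawkes_X \<mu> \<Phi> \<zeta> t J"
proof -
  have "hawkes_X \<mu> \<Phi> \<zeta> t (J - {a}) = (\<Sum>x\<in>{x\<in>J - {a}. 0 < fst x \<and> fst x < t}.
      if snd x \<le> hawkes_lambda \<mu> \<Phi> J (fst x) then \<zeta> (t - fst x) else 0)"
    unfolding hawkes_X_def hawkes_lambda_remove_rejected[OF fin rejected] ..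
  also have "\<dots> = hawkes_X \<mu> \<Phi> \<zeta> t J"
    unfolding hawkes_X_def
    using sum_accepted_Diff_rejected[of J a "hawkes_lambda \<mu> \<Phi> J"] fin rejected by simp
  finally show ?thesis .
qed

lemma hawkes_lambda_le_sum_before:
  assumes fin: "finite S" and J: "J \<subseteq> S" and Phi_nonneg: "\<forall>s\<ge>0. \<Phi> s \<ge> 0"
  shows "hawkes_lambda \<mu> \<Phi> J s \<le> \<mu> + (\<Sum>y\<in>{y\<in>S. fst y < s}. \<Phi> (s - fst y))"
proof -
  define A where "A = {x\<in>J. 0 < fst x \<and> fst x < s}"
  have AS: "A \<subseteq> {y\<in>S. fst y < s}"
    using J by (auto simp: A_def)
  have nonneg: "\<Phi> (s - fst y) \<ge> 0" if "y \<in> {y\<in>S. fst y < s}" for y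
    using that Phi_nonneg by auto
  have "hawkes_lambda \<mu> \<Phi> J s
        = \<mu> + (\<Sum>x\<in>A. if snd x \<le> hawkes_lambda \<mu> \<Phi> J (fst x) then \<Phi> (s - fst x) else 0)"
    using finite_subset[OF J fin] by (subst hawkes_lambda.simps) (simp add: A_def)
  also have "\<dots> \<le> \<mu> + (\<Sum>x\<in>A. \<Phi> (s - fst x))"
    using AS nonneg by (intro add_left_mono sum_mono) auto
  also have "\<dots> \<le> \<mu> + (\<Sum>y\<in>{y\<in>S. fst y < s}. \<Phi> (s - fst y))"
    using AS nonneg fin by (intro add_left_mono sum_mono2) auto
  finally show ?thesis .
qed

lemma distinct_if_sorted_wrt_fst_less:
  fixes xs :: "('a::linorder \<times> 'b) list"
  assumes "sorted_wrt (\<lambda>a b. fst a < fst b) xs"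
  shows "distinct xs"
proof -
  have "sorted_wrt (<) (map fst xs)"
    using assms by (simp add: sorted_wrt_map)
  then show ?thesis
    by (simp add: strict_sorted_iff distinct_map)
qed

lemma sum_before_nth_if_sorted:
  fixes xs :: "('a::linorder \<times> 'b) list"
  assumes sorted: "sorted_wrt (\<lambda>a b. fst a < fst b) xs" and i: "i < length xs"
  shows "(\<Sum>y\<in>{y\<in>set xs. fst y < fst (xs ! i)}. f y) = (\<Sum>j<i. f (xs ! j))"
proof -
  have "{y\<in>set xs. fst y < fst (xs ! i)} = (!) xs ` {..<i}"
  proof (intro equalityI subsetI)
    fix y assume "y \<in> {y\<in>set xs. fst y < fst (xs ! i)}"
    then obtain j where j: "j < length xs" "y = xs ! j" and lt: "fst (xs ! j) < fst (xs ! i)"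
      by (auto simp: in_set_conv_nth)
    have "j < i"
      using lt j(1) i sorted_wrt_nth_less[OF sorted, of i j] by (cases i j rule: linorder_cases) auto
    then show "y \<in> (!) xs ` {..<i}"
      using j by auto
  next
    fix y assume "y \<in> (!) xs ` {..<i}"
    then show "y \<in> {y\<in>set xs. fst y < fst (xs ! i)}"
      using sorted_wrt_nth_less[OF sorted, of _ i] i by auto
  qed
  moreover have "inj_on ((!) xs) {..<i}"
    using inj_on_nth[OF distinct_if_sorted_wrt_fst_less[OF sorted], of "{..<i}"] i by simp
  ultimately show ?thesis
    by (simp add: sum.reindex)
qed

lemma c_coef_eq_diff_op_if_sorted:
  assumes "sorted_wrt (\<lambda>a b. fst a < fst b) xs"
  shows "c_coef \<mu> \<Phi> \<zeta> t xs = diff_op xs (hawkes_X \<mu> \<Phi> \<zeta> t)"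
proof -
  have "sorted (map fst xs)"
    using sorted_wrt_mono_rel[OF _ assms, of "\<lambda>a b. fst a \<le> fst b"] by (simp add: sorted_wrt_map)
  then show ?thesis
    by (simp add: c_coef_def sort_key_id_if_sorted)
qed

lemma c_coef_eq_0_if_rejected_by_bound:
  assumes Phi_nonneg: "\<forall>s\<ge>0. \<Phi> s \<ge> 0"
    and sorted: "sorted_wrt (\<lambda>a b. fst a < fst b) xs" and i: "i < length xs"
    and above: "\<not> snd (xs ! i) \<le> \<mu> + (\<Sum>j<i. \<Phi> (fst (xs ! i) - fst (xs ! j)))"
  shows "c_coef \<mu> \<Phi> \<zeta> t xs = 0"
proof -
  have "hawkes_X \<mu> \<Phi> \<zeta> t J = hawkes_X \<mu> \<Phi> \<zeta> t (J - {xs ! i})" if J: "J \<subseteq> set xs" for J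
  proof (rule hawkes_X_remove_rejected[symmetric])
    show "finite J"
      using J finite_subset by blast
    show "\<not> snd (xs ! i) \<le> hawkes_lambda \<mu> \<Phi> J (fst (xs ! i))"
      using hawkes_lambda_le_sum_before[OF _ J Phi_nonneg, of \<mu> "fst (xs ! i)"] above
        sum_before_nth_if_sorted[OF sorted i, of "\<lambda>y. \<Phi> (fst (xs ! i) - fst y)"] by simp
  qed
  then have "diff_op xs (hawkes_X \<mu> \<Phi> \<zeta> t) = 0"
    using distinct_if_sorted_wrt_fst_less[OF sorted] i
    by (intro diff_op_eq_0_if_redundant[of _ "xs ! i"]) auto
  then show ?thesis
    using c_coef_eq_diff_op_if_sorted[OF sorted] by simp
qed

theorem lemma5p1:
  fixes \<mu> t :: real and \<Phi> \<zeta> :: "real \<Rightarrow> real" and n :: nat and xs :: "(real \<times> real) list"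
  assumes mu_pos: "\<mu> > 0"
    and Phi_nonneg: "\<forall>s\<ge>0. \<Phi> s \<ge> 0"
    and Phi_int: "\<Phi> integrable_on {0..}"
    and Phi_lt1: "integral {0..} \<Phi> < 1"
    and zeta: "\<zeta> = \<Phi> \<or> \<zeta> = (\<lambda>_. 1)"
    and t_nonneg: "t \<ge> 0"
    and n_pos: "n \<ge> 1"
    and len: "length xs = n"
    and ordered: "sorted_wrt (\<lambda>a b. fst a < fst b) xs"
    and in_box: "\<forall>x\<in>set xs. 0 < fst x \<and> fst x \<le> t \<and> 0 \<le> snd x"
  shows "c_coef \<mu> \<Phi> \<zeta> t xs =
           c_coef \<mu> \<Phi> \<zeta> t xs
           * (if snd (xs ! 0) \<le> \<mu> then 1 else 0)
           * (\<Prod>i\<in>{1..<n}.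
                if snd (xs ! i) \<le> \<mu> + (\<Sum>j<i. \<Phi> (fst (xs ! i) - fst (xs ! j))) then 1 else 0)"
proof (cases "\<exists>i<n. \<not> snd (xs ! i) \<le> \<mu> + (\<Sum>j<i. \<Phi> (fst (xs ! i) - fst (xs ! j)))")
  case True
  then show ?thesis
    using c_coef_eq_0_if_rejected_by_bound[OF Phi_nonneg ordered] len by auto
next
  case False
  then have "snd (xs ! 0) \<le> \<mu>"
    using n_pos by fastforce
  moreover have "(\<Prod>i\<in>{1..<n}.
      if snd (xs ! i) \<le> \<mu> + (\<Sum>j<i. \<Phi> (fst (xs ! i) - fst (xs ! j))) then 1 else 0) = (1::real)"
    using False by (intro prod.neutral) auto
  ultimately show ?thesis
    by simp
qed

end
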